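(* Let $a,b,d,f,c\in\mathbb{C}$ with $b\neq0$ and $d\neq0$. Then for every orbit $(z_1(n),z_2(n))$ of the system, $(z_1(n))$ is bounded if and only if $(z_2(n))$ is bounded.
   Context: The 2D coupled quadratic system with connectivity matrix $A=\begin{pmatrix}a&b\\ d&f\end{pmatrix}$ and parameter $c\in\mathbb{C}$ is the iteration $z_1(n+1)=(az_1(n)+bz_2(n))^2+c$, $z_2(n+1)=(dz_1(n)+fz_2(n))^2+c$, $n\ge 0$, from an initial condition $(z_1(0),z_2(0))\in\mathbb{C}^2$. *)

theory Defs
  imports "HOL-Analysis.Analysis"
begin

end

theory Submission
  imports Defs
begin

text \<open>If \<open>z\<^sub>1\<close> is bounded, the recursion for \<open>z\<^sub>1\<close> bounds the squares of
  \<open>a z\<^sub>1(n) + b z\<^sub>2(n)\<close>, hence these linear combinations themselves, and since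
  \<open>b \<noteq> 0\<close> one can solve for \<open>z\<^sub>2(n)\<close>. The converse is symmetric, using \<open>d \<noteq> 0\<close>.\<close>

lemma norm_le_one_plus_power2_norm:
  fixes w :: "'a::real_normed_div_algebra"
  shows "norm w \<le> 1 + norm w ^ 2"
proof -
  have "0 \<le> (norm w - 1) ^ 2 + norm w" by simp
  then show ?thesis by (simp add: power2_diff algebra_simps)
qed

lemma bounded_range_of_square_plus_const:
  fixes w x :: "nat \<Rightarrow> 'a::real_normed_div_algebra"
  assumes rec: "\<And>n. x (Suc n) = (w n) ^ 2 + c" and bx: "bounded (range x)"
  shows "bounded (range w)"
proof -
  obtain B where B: "\<And>n. norm (x n) \<le> B"
    using bx unfolding bounded_iff by auto
  have "norm (w n) \<le> 1 + B + norm c" for n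
  proof -
    have "norm (w n) ^ 2 = norm (x (Suc n) - c)"
      by (simp add: rec norm_power)
    also have "\<dots> \<le> B + norm c"
      using norm_triangle_ineq4[of "x (Suc n)" c] B[of "Suc n"] by linarith
    finally show ?thesis
      using norm_le_one_plus_power2_norm[of "w n"] by linarith
  qed
  then show ?thesis unfolding bounded_iff by auto
qed

lemma bounded_range_of_linear_combination:
  fixes x y :: "nat \<Rightarrow> 'a::real_normed_field"
  assumes q: "q \<noteq> 0"
    and bxy: "bounded (range (\<lambda>n. p * x n + q * y n))" and bx: "bounded (range x)"
  shows "bounded (range y)"
proof -
  obtain A where A: "\<And>n. norm (p * x n + q * y n) \<le> A"
    using bxy unfolding bounded_iff by auto
  obtain B where B: "\<And>n. norm (x n) \<le> B"
    using bx unfolding bounded_iff by auto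
  have "norm (y n) \<le> (A + norm p * B) / norm q" for n
  proof -
    have "norm q * norm (y n) = norm ((p * x n + q * y n) - p * x n)"
      by (simp add: norm_mult)
    also have "\<dots> \<le> A + norm p * B"
      using norm_triangle_ineq4[of "p * x n + q * y n" "p * x n"] A[of n]
        mult_left_mono[OF B[of n] norm_ge_zero[of p]]
      by (simp add: norm_mult)
    finally show ?thesis using q by (simp add: field_simps)
  qed
  then show ?thesis unfolding bounded_iff by auto
qed

lemma bounded_partner_of_bounded:
  fixes x y :: "nat \<Rightarrow> 'a::real_normed_field"
  assumes "q \<noteq> 0" and "\<And>n. x (Suc n) = (p * x n + q * y n) ^ 2 + c"
    and "bounded (range x)"
  shows "bounded (range y)"
  using assms
  by (blast intro: bounded_range_of_linear_combination bounded_range_of_square_plus_const)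

theorem mainTheorem6:
  fixes a b d f c :: complex and z1 z2 :: "nat \<Rightarrow> complex"
  assumes "b \<noteq> 0" and "d \<noteq> 0"
    and "\<And>n. z1 (Suc n) = (a * z1 n + b * z2 n)^2 + c"
    and "\<And>n. z2 (Suc n) = (d * z1 n + f * z2 n)^2 + c"
  shows "bounded (range z1) \<longleftrightarrow> bounded (range z2)"
proof
  show "bounded (range z1) \<Longrightarrow> bounded (range z2)"
    using bounded_partner_of_bounded[of b z1 a z2 c, OF assms(1,3)] .
  have "\<And>n. z2 (Suc n) = (f * z2 n + d * z1 n)^2 + c"
    using assms(4) by (simp add: add.commute)
  then show "bounded (range z2) \<Longrightarrow> bounded (range z1)"
    by (rule bounded_partner_of_bounded[of d z2 f z1 c, OF assms(2)])
qed

end
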